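(* Let $f:\mathbb{R}^n\to\mathbb{R}$ be twice continuously differentiable, $B\in\mathbb{R}^{p\times n}$, $\lambda_1,\lambda_2>0$, $l\in\mathbb{R}^n$ with $l\le 0$, $u\in\mathbb{R}^n$ with $u\ge 0$, $\Omega=\{x\in\mathbb{R}^n: l\le x\le u\}$, $g(x)=\lambda_1\|Bx\|_0+\lambda_2\|x\|_0+\delta_\Omega(x)$ and $F=f+g$. For $z\in\mathbb{R}^n$ let $$\Pi(z)=\{x\in\Omega:\ \mathrm{supp}(x)\subset\mathrm{supp}(z),\ \mathrm{supp}(Bx)\subset\mathrm{supp}(Bz)\}.$$ Fix any $z\in\Omega$. Then: (i) $\partial F(z)=\nabla f(z)+\partial g(z)=\nabla f(z)+\mathcal{N}_{\Pi(z)}(z)$; (ii) for any $x\in\mathbb{R}^n$, $0\in\nabla f(x)+\mathcal{N}_{\Pi(z)}(x)$ implies $0\in\partial F(x)$.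
   Context: $\|y\|_0$ is the number of nonzero entries of $y$ and $\mathrm{supp}(y)=\{i: y_i\neq 0\}$. $\delta_\Omega$ is the indicator function of $\Omega$ ($0$ on $\Omega$, $+\infty$ outside). $\partial$ denotes the basic (limiting) subdifferential. $\Pi(z)$ is a convex polyhedral set and $\mathcal{N}_{\Pi(z)}(x)$ is its normal cone at $x$ (empty if $x\notin\Pi(z)$). *)

theory Defs
  imports "HOL-Analysis.Analysis"
begin

definition supp :: "real ^ 'n \<Rightarrow> 'n set" where
  "supp x = {i. x $ i \<noteq> 0}"

definition l0 :: "real ^ 'n \<Rightarrow> nat" where
  "l0 x = card (supp x)"

definition indicator_fun :: "'a set \<Rightarrow> 'a \<Rightarrow> ereal" where
  "indicator_fun S x = (if x \<in> S then 0 else \<infinity>)"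

definition box_set :: "real ^ 'n \<Rightarrow> real ^ 'n \<Rightarrow> (real ^ 'n) set" where
  "box_set l u = {x. \<forall>i. l $ i \<le> x $ i \<and> x $ i \<le> u $ i}"

definition normal_cone :: "(real ^ 'n) set \<Rightarrow> real ^ 'n \<Rightarrow> (real ^ 'n) set" where
  "normal_cone C x = (if x \<in> C then {v. \<forall>y\<in>C. v \<bullet> (y - x) \<le> 0} else {})"

definition frechet_subdiff :: "(real ^ 'n \<Rightarrow> ereal) \<Rightarrow> real ^ 'n \<Rightarrow> (real ^ 'n) set" where
  "frechet_subdiff F x = {v. \<bar>F x\<bar> \<noteq> \<infinity> \<and>
     (\<forall>e>0. \<exists>d>0. \<forall>y. norm (y - x) < d \<longrightarrow>
        F y \<ge> F x + ereal (v \<bullet> (y - x)) - ereal (e * norm (y - x)))}"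

definition limiting_subdiff :: "(real ^ 'n \<Rightarrow> ereal) \<Rightarrow> real ^ 'n \<Rightarrow> (real ^ 'n) set" where
  "limiting_subdiff F x = {v. \<bar>F x\<bar> \<noteq> \<infinity> \<and>
     (\<exists>xs vs. xs \<longlonglongrightarrow> x \<and> (\<lambda>k. F (xs k)) \<longlonglongrightarrow> F x \<and> vs \<longlonglongrightarrow> v \<and>
        (\<forall>k. vs k \<in> frechet_subdiff F (xs k)))}"

definition C2_with_grad :: "(real ^ 'n \<Rightarrow> real) \<Rightarrow> (real ^ 'n \<Rightarrow> real ^ 'n) \<Rightarrow> bool" where
  "C2_with_grad f gf \<longleftrightarrow> (\<forall>x. GDERIV f x :> gf x) \<and>
     (\<exists>H :: real ^ 'n \<Rightarrow> ((real ^ 'n) \<Rightarrow>\<^sub>L (real ^ 'n)).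
        (\<forall>x. (gf has_derivative blinfun_apply (H x)) (at x)) \<and> continuous_on UNIV H)"

end

theory Submission
  imports Defs
begin

(* Near z supports can only grow.  Hence, on a neighbourhood of z, g is constant on the convex
   set \<Pi>(z) and exceeds g(z) by at least min \<lambda>1 \<lambda>2 off it, so its regular subdifferential at z
   is the normal cone of \<Pi>(z).  The same jump forces the points x_k of any sequence defining a
   limiting subgradient into \<Pi>(z), where \<Pi>(x_k) = \<Pi>(z); limiting subgradients are therefore
   limits of normals to one fixed convex set.  The smooth part f enters through the elementary
   sum rule, and (ii) follows because \<Pi>(x) \<subseteq> \<Pi>(z) for x \<in> \<Pi>(z). *)

lemma eventually_supp_superset:
  fixes h :: "'a \<Rightarrow> real^'n"
  assumes "(h \<longlongrightarrow> x) F"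
  shows "eventually (\<lambda>k. supp x \<subseteq> supp (h k)) F"
proof -
  have "eventually (\<lambda>k. \<forall>i\<in>supp x. h k $ i \<noteq> 0) F"
    using tendsto_imp_eventually_ne[OF tendsto_vec_nth[OF assms]]
    by (intro eventually_ball_finite) (auto simp: supp_def)
  then show ?thesis
    by eventually_elim (auto simp: supp_def)
qed

lemma eventually_supps_superset:
  fixes xs :: "'a \<Rightarrow> real^'n" and B :: "real^'n^'p"
  assumes "(xs \<longlongrightarrow> x) F"
  shows "eventually (\<lambda>k. supp x \<subseteq> supp (xs k) \<and> supp (B *v x) \<subseteq> supp (B *v xs k)) F"
proof -
  have "((\<lambda>k. B *v xs k) \<longlongrightarrow> B *v x) F"
    using bounded_linear.tendsto[OF matrix_vector_mul_bounded_linear assms] .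
  then show ?thesis
    by (intro eventually_conj eventually_supp_superset assms)
qed

lemma supp_lincomb_subset: "supp (s *\<^sub>R x + t *\<^sub>R y) \<subseteq> supp x \<union> supp y"
  by (auto simp: supp_def)

lemma l0_mono: "supp x \<subseteq> supp y \<Longrightarrow> l0 x \<le> l0 y"
  unfolding l0_def by (simp add: card_mono)

lemma l0_strict_mono: "supp x \<subset> supp y \<Longrightarrow> l0 x < l0 y"
  unfolding l0_def by (simp add: psubset_card_mono)

definition l0_penalty :: "real^'n^'p \<Rightarrow> real \<Rightarrow> real \<Rightarrow> real^'n \<Rightarrow> real" where
  "l0_penalty B a b x = a * real (l0 (B *v x)) + b * real (l0 x)"

definition constrained_l0_penalty ::
    "real^'n^'p \<Rightarrow> real \<Rightarrow> real \<Rightarrow> (real^'n) set \<Rightarrow> real^'n \<Rightarrow> ereal" where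
  "constrained_l0_penalty B a b \<Omega> x = ereal (l0_penalty B a b x) + indicator_fun \<Omega> x"

definition supp_restr :: "real^'n^'p \<Rightarrow> (real^'n) set \<Rightarrow> real^'n \<Rightarrow> (real^'n) set" where
  "supp_restr B \<Omega> w = {x \<in> \<Omega>. supp x \<subseteq> supp w \<and> supp (B *v x) \<subseteq> supp (B *v w)}"

lemma constrained_l0_penalty_eq:
  "constrained_l0_penalty B a b \<Omega> x = (if x \<in> \<Omega> then ereal (l0_penalty B a b x) else \<infinity>)"
  by (simp add: constrained_l0_penalty_def indicator_fun_def)

lemma l0_penalty_mono:
  assumes "a \<ge> 0" "b \<ge> 0" "supp x \<subseteq> supp y" "supp (B *v x) \<subseteq> supp (B *v y)"
  shows "l0_penalty B a b x \<le> l0_penalty B a b y"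
  unfolding l0_penalty_def using assms
  by (intro add_mono mult_left_mono) (auto intro: l0_mono)

lemma l0_penalty_jump:
  assumes "a > 0" "b > 0" "supp x \<subseteq> supp y" "supp (B *v x) \<subseteq> supp (B *v y)"
    and "\<not> (supp y \<subseteq> supp x \<and> supp (B *v y) \<subseteq> supp (B *v x))"
  shows "l0_penalty B a b x + min a b \<le> l0_penalty B a b y"
proof -
  have le: "l0 x \<le> l0 y" "l0 (B *v x) \<le> l0 (B *v y)"
    using assms(3,4) by (auto intro: l0_mono)
  have "l0 x < l0 y \<or> l0 (B *v x) < l0 (B *v y)"
    using assms(3-5) by (auto intro: l0_strict_mono)
  then consider "real (l0 x) + 1 \<le> real (l0 y)" | "real (l0 (B *v x)) + 1 \<le> real (l0 (B *v y))"
    by linarith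
  then show ?thesis
  proof cases
    case 1
    have "a * real (l0 (B *v x)) \<le> a * real (l0 (B *v y))" "b * (real (l0 x) + 1) \<le> b * real (l0 y)"
      using le 1 assms(1,2) by (intro mult_left_mono; simp)+
    then show ?thesis unfolding l0_penalty_def by (simp add: distrib_left min_le_iff_disj)
  next
    case 2
    have "b * real (l0 x) \<le> b * real (l0 y)" "a * (real (l0 (B *v x)) + 1) \<le> a * real (l0 (B *v y))"
      using le 2 assms(1,2) by (intro mult_left_mono; simp)+
    then show ?thesis unfolding l0_penalty_def by (simp add: distrib_left min_le_iff_disj)
  qed
qed

lemma self_mem_supp_restr: "x \<in> \<Omega> \<Longrightarrow> x \<in> supp_restr B \<Omega> x"
  by (simp add: supp_restr_def)

lemma supp_restr_mono: "y \<in> supp_restr B \<Omega> x \<Longrightarrow> supp_restr B \<Omega> y \<subseteq> supp_restr B \<Omega> x"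
  by (auto simp: supp_restr_def)

lemma convex_supp_restr:
  assumes "convex \<Omega>"
  shows "convex (supp_restr B \<Omega> w)"
proof (rule convexI)
  fix x y and s t :: real
  assume x: "x \<in> supp_restr B \<Omega> w" and y: "y \<in> supp_restr B \<Omega> w"
    and st: "0 \<le> s" "0 \<le> t" "s + t = 1"
  have "B *v (s *\<^sub>R x + t *\<^sub>R y) = s *\<^sub>R (B *v x) + t *\<^sub>R (B *v y)"
    by (simp add: matrix_vector_right_distrib matrix_vector_mult_scaleR)
  moreover have "s *\<^sub>R x + t *\<^sub>R y \<in> \<Omega>"
    using x y st assms by (simp add: supp_restr_def convexD)
  ultimately show "s *\<^sub>R x + t *\<^sub>R y \<in> supp_restr B \<Omega> w"
    using x y supp_lincomb_subset[of s x t y] supp_lincomb_subset[of s "B *v x" t "B *v y"]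
    unfolding supp_restr_def by auto
qed

lemma box_set_eq_cbox: "box_set l u = cbox l u"
  by (auto simp: box_set_def mem_box_cart)

lemma normal_cone_antimono: "x \<in> C \<Longrightarrow> C \<subseteq> D \<Longrightarrow> normal_cone D x \<subseteq> normal_cone C x"
  unfolding normal_cone_def by auto

lemma normal_cone_limit:
  assumes "x \<in> C" "xs \<longlonglongrightarrow> x" "vs \<longlonglongrightarrow> v"
    and "eventually (\<lambda>k. vs k \<in> normal_cone C (xs k)) sequentially"
  shows "v \<in> normal_cone C x"
proof -
  have "v \<bullet> (y - x) \<le> 0" if "y \<in> C" for y
  proof (rule tendsto_upperbound)
    show "(\<lambda>k. vs k \<bullet> (y - xs k)) \<longlonglongrightarrow> v \<bullet> (y - x)"
      by (intro tendsto_intros assms)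
    show "eventually (\<lambda>k. vs k \<bullet> (y - xs k) \<le> 0) sequentially"
      using assms(4) by eventually_elim (use \<open>y \<in> C\<close> in \<open>auto simp: normal_cone_def split: if_splits\<close>)
  qed simp
  then show ?thesis
    using assms(1) by (simp add: normal_cone_def)
qed

lemma frechet_subdiff_iff_eventually:
  "v \<in> frechet_subdiff F x \<longleftrightarrow> \<bar>F x\<bar> \<noteq> \<infinity> \<and>
     (\<forall>e>0. eventually (\<lambda>y. F x + ereal (v \<bullet> (y - x)) - ereal (e * norm (y - x)) \<le> F y) (nhds x))"
  unfolding frechet_subdiff_def eventually_nhds_metric dist_norm by simp

lemma frechet_subdiff_subset_limiting_subdiff: "frechet_subdiff F x \<subseteq> limiting_subdiff F x"
proof
  fix v assume "v \<in> frechet_subdiff F x"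
  then show "v \<in> limiting_subdiff F x"
    unfolding limiting_subdiff_def frechet_subdiff_def
    by (intro CollectI conjI exI[of _ "\<lambda>k. x"] exI[of _ "\<lambda>k. v"]) auto
qed

lemma frechet_subdiff_subset_normal_cone:
  assumes "convex C" "x \<in> C" "\<forall>y\<in>C. F y \<le> F x"
  shows "frechet_subdiff F x \<subseteq> normal_cone C x"
proof
  fix v assume v: "v \<in> frechet_subdiff F x"
  then obtain r where r: "F x = ereal r"
    unfolding frechet_subdiff_def by (cases "F x") auto
  have "v \<bullet> (y - x) \<le> 0" if y: "y \<in> C" for y
  proof (rule ccontr)
    assume "\<not> v \<bullet> (y - x) \<le> 0"
    then have s: "v \<bullet> (y - x) > 0" by simp
    then have n: "norm (y - x) > 0" by auto
    define e where "e = v \<bullet> (y - x) / (2 * norm (y - x))"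
    have "e > 0" using s n by (simp add: e_def)
    then obtain d where d: "d > 0" and near: "\<And>w. norm (w - x) < d \<Longrightarrow>
        F x + ereal (v \<bullet> (w - x)) - ereal (e * norm (w - x)) \<le> F w"
      using v unfolding frechet_subdiff_def by blast
    define t where "t = min 1 (d / (2 * norm (y - x)))"
    have t: "0 < t" "t \<le> 1" "t * norm (y - x) < d"
      using d n by (auto simp: t_def min_mult_distrib_right)
    define w where "w = x + t *\<^sub>R (y - x)"
    have "w = (1 - t) *\<^sub>R x + t *\<^sub>R y" by (simp add: w_def algebra_simps)
    then have "w \<in> C" using assms(1,2) y t by (simp add: convex_alt)
    have "norm (w - x) = t * norm (y - x)" using t by (simp add: w_def)
    moreover have "v \<bullet> (w - x) = t * (v \<bullet> (y - x))" by (simp add: w_def)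
    ultimately have "ereal (r + t * (v \<bullet> (y - x)) / 2) \<le> F w"
      using near[of w] t n by (simp add: r e_def field_simps)
    also have "F w \<le> ereal r" using assms(3) \<open>w \<in> C\<close> r by simp
    finally show False using mult_pos_pos[OF t(1) s] by simp
  qed
  then show "v \<in> normal_cone C x" using assms(2) by (simp add: normal_cone_def)
qed

lemma normal_cone_subset_frechet_subdiff:
  assumes r: "F x = ereal r" and "c > 0"
    and near: "eventually (\<lambda>y. F x \<le> F y \<and> (y \<notin> C \<longrightarrow> F x + ereal c \<le> F y)) (nhds x)"
  shows "normal_cone C x \<subseteq> frechet_subdiff F x"
proof
  fix v assume v: "v \<in> normal_cone C x"
  have "eventually (\<lambda>y. F x + ereal (v \<bullet> (y - x)) - ereal (e * norm (y - x)) \<le> F y) (nhds x)"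
    if "e > 0" for e
  proof -
    \<comment> \<open>on this ball the jump c off C dominates the linear term\<close>
    have "eventually (\<lambda>y. dist y x < c / (norm v + 1)) (nhds x)"
      using \<open>c > 0\<close> unfolding eventually_nhds_metric
      by (intro exI[of _ "c / (norm v + 1)"]) (auto intro!: divide_pos_pos add_nonneg_pos)
    with near show ?thesis
    proof eventually_elim
      case (elim y)
      have "v \<bullet> (y - x) \<le> norm v * norm (y - x)" by (rule norm_cauchy_schwarz)
      also have "\<dots> \<le> (norm v + 1) * norm (y - x)" by (simp add: mult_right_mono)
      also have "\<dots> \<le> c"
        using elim(2) by (simp add: dist_norm pos_less_divide_eq[OF add_nonneg_pos] mult.commute)
      finally have "v \<bullet> (y - x) \<le> c" .
      moreover have "y \<in> C \<Longrightarrow> v \<bullet> (y - x) \<le> 0" using v by (simp add: normal_cone_def split: if_splits)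
      moreover have "0 \<le> e * norm (y - x)" using \<open>e > 0\<close> by simp
      ultimately have "ereal (r + v \<bullet> (y - x) - e * norm (y - x)) \<le> F x + ereal (if y \<in> C then 0 else c)"
        by (auto simp: r)
      also have "\<dots> \<le> F y" using elim(1) r by auto
      finally have "ereal (r + v \<bullet> (y - x) - e * norm (y - x)) \<le> F y" .
      then show ?case by (simp add: r)
    qed
  qed
  then show "v \<in> frechet_subdiff F x"
    using r by (simp add: frechet_subdiff_iff_eventually)
qed

lemma frechet_subdiff_add_smooth:
  assumes "GDERIV \<phi> x :> p" and "w \<in> frechet_subdiff H x"
  shows "p + w \<in> frechet_subdiff (\<lambda>y. ereal (\<phi> y) + H y) x"
proof -
  obtain r where r: "H x = ereal r"
    using assms(2) by (cases "H x") (auto simp: frechet_subdiff_def)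
  have taylor: "eventually (\<lambda>y. \<bar>\<phi> y - \<phi> x - (y - x) \<bullet> p\<bar> \<le> e * norm (y - x)) (nhds x)"
    if "e > 0" for e
    using assms(1) that unfolding gderiv_def has_derivative_at_alt eventually_nhds_metric dist_norm
    by simp
  have subgrad: "eventually (\<lambda>y. H x + ereal (w \<bullet> (y - x)) - ereal (e * norm (y - x)) \<le> H y) (nhds x)"
    if "e > 0" for e
    using assms(2) that by (simp add: frechet_subdiff_iff_eventually)
  have "eventually (\<lambda>y. ereal (\<phi> x) + H x + ereal ((p + w) \<bullet> (y - x)) - ereal (e * norm (y - x))
      \<le> ereal (\<phi> y) + H y) (nhds x)" if "e > 0" for e
    using taylor[OF half_gt_zero[OF that]] subgrad[OF half_gt_zero[OF that]]
  proof eventually_elim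
    case (elim y)
    show ?case
    proof (cases "H y")
      case (real s)
      have "\<phi> x + (y - x) \<bullet> p - e / 2 * norm (y - x) \<le> \<phi> y"
        using elim(1) by (simp only: abs_le_iff) linarith
      moreover have "r + w \<bullet> (y - x) - e / 2 * norm (y - x) \<le> s"
        using elim(2) by (simp add: r real)
      ultimately show ?thesis
        by (simp add: r real inner_add_left inner_commute[of p])
    qed (use elim r in auto)
  qed
  then show ?thesis
    using r by (simp add: frechet_subdiff_iff_eventually)
qed

lemma limiting_subdiff_add_smooth:
  assumes grad: "\<And>y. GDERIV \<phi> y :> p y" and "continuous_on UNIV p"
    and "w \<in> limiting_subdiff H x"
  shows "p x + w \<in> limiting_subdiff (\<lambda>y. ereal (\<phi> y) + H y) x"
proof -
  obtain xs vs where xs: "xs \<longlonglongrightarrow> x" and Hxs: "(\<lambda>k. H (xs k)) \<longlonglongrightarrow> H x"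
    and vs: "vs \<longlonglongrightarrow> w" and frechet: "\<And>k. vs k \<in> frechet_subdiff H (xs k)"
    using assms(3) unfolding limiting_subdiff_def by blast
  have fin: "\<bar>H x\<bar> \<noteq> \<infinity>"
    using assms(3) by (simp add: limiting_subdiff_def)
  have "continuous_on UNIV \<phi>"
    using grad unfolding gderiv_def by (meson continuous_at_imp_continuous_on has_derivative_continuous)
  then have "(\<lambda>k. \<phi> (xs k)) \<longlonglongrightarrow> \<phi> x" "(\<lambda>k. p (xs k)) \<longlonglongrightarrow> p x"
    using \<open>continuous_on UNIV p\<close> xs by (auto intro: continuous_on_tendsto_compose)
  then have "(\<lambda>k. ereal (\<phi> (xs k)) + H (xs k)) \<longlonglongrightarrow> ereal (\<phi> x) + H x"
    "(\<lambda>k. p (xs k) + vs k) \<longlonglongrightarrow> p x + w"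
    using Hxs fin vs by (auto intro: tendsto_add_ereal tendsto_add)
  moreover have "p (xs k) + vs k \<in> frechet_subdiff (\<lambda>y. ereal (\<phi> y) + H y) (xs k)" for k
    using grad frechet by (rule frechet_subdiff_add_smooth)
  moreover have "\<bar>ereal (\<phi> x) + H x\<bar> \<noteq> \<infinity>"
    using fin by (cases "H x") auto
  ultimately show ?thesis
    unfolding limiting_subdiff_def using xs by blast
qed

lemma limiting_subdiff_add_smooth_eq:
  assumes "\<And>y. GDERIV \<phi> y :> p y" and "continuous_on UNIV p"
  shows "limiting_subdiff (\<lambda>y. ereal (\<phi> y) + H y) x = (\<lambda>v. p x + v) ` limiting_subdiff H x"
proof
  show "(\<lambda>v. p x + v) ` limiting_subdiff H x \<subseteq> limiting_subdiff (\<lambda>y. ereal (\<phi> y) + H y) x"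
    using limiting_subdiff_add_smooth[OF assms] by blast
  show "limiting_subdiff (\<lambda>y. ereal (\<phi> y) + H y) x \<subseteq> (\<lambda>v. p x + v) ` limiting_subdiff H x"
  proof
    fix w assume "w \<in> limiting_subdiff (\<lambda>y. ereal (\<phi> y) + H y) x"
    with GDERIV_minus[OF assms(1)] continuous_on_minus[OF assms(2)]
    have "- p x + w \<in> limiting_subdiff (\<lambda>y. ereal (- \<phi> y) + (ereal (\<phi> y) + H y)) x"
      by (rule limiting_subdiff_add_smooth)
    also have "(\<lambda>y. ereal (- \<phi> y) + (ereal (\<phi> y) + H y)) = H"
      by (simp add: add.assoc[symmetric])
    finally show "w \<in> (\<lambda>v. p x + v) ` limiting_subdiff H x"
      by (rule rev_image_eqI) simp
  qed
qed

lemma C2_with_grad_imp_C1: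
  assumes "C2_with_grad f gf"
  shows "GDERIV f x :> gf x" and "continuous_on UNIV gf"
  using assms unfolding C2_with_grad_def
  by (meson continuous_at_imp_continuous_on has_derivative_continuous)+

lemma frechet_subdiff_constrained_l0_penalty:
  assumes ab: "a > 0" "b > 0" and "convex \<Omega>" "x \<in> \<Omega>"
  shows "frechet_subdiff (constrained_l0_penalty B a b \<Omega>) x = normal_cone (supp_restr B \<Omega> x) x"
    (is "frechet_subdiff ?g x = normal_cone ?C x")
proof
  show "frechet_subdiff ?g x \<subseteq> normal_cone ?C x"
  proof (rule frechet_subdiff_subset_normal_cone)
    show "convex ?C" using \<open>convex \<Omega>\<close> by (rule convex_supp_restr)
    show "x \<in> ?C" using \<open>x \<in> \<Omega>\<close> by (rule self_mem_supp_restr)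
    show "\<forall>y\<in>?C. ?g y \<le> ?g x"
      using ab \<open>x \<in> \<Omega>\<close>
      by (auto simp: constrained_l0_penalty_eq supp_restr_def intro: l0_penalty_mono)
  qed
  have near: "eventually (\<lambda>y. ?g x \<le> ?g y \<and> (y \<notin> ?C \<longrightarrow> ?g x + ereal (min a b) \<le> ?g y)) (nhds x)"
    using eventually_supps_superset[OF filterlim_ident, of x B]
  proof eventually_elim
    case (elim y)
    show ?case
    proof (cases "y \<in> \<Omega>")
      case True
      have "l0_penalty B a b x \<le> l0_penalty B a b y"
        using elim ab by (intro l0_penalty_mono) auto
      moreover have "l0_penalty B a b x + min a b \<le> l0_penalty B a b y" if "y \<notin> ?C"
        using elim ab that True by (intro l0_penalty_jump) (auto simp: supp_restr_def)
      ultimately show ?thesis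
        using True \<open>x \<in> \<Omega>\<close> by (simp add: constrained_l0_penalty_eq del: ereal_min)
    qed (simp add: constrained_l0_penalty_eq)
  qed
  show "normal_cone ?C x \<subseteq> frechet_subdiff ?g x"
    using ab \<open>x \<in> \<Omega>\<close>
    by (intro normal_cone_subset_frechet_subdiff[OF _ _ near]) (simp_all add: constrained_l0_penalty_eq)
qed

lemma limiting_subdiff_constrained_l0_penalty:
  assumes ab: "a > 0" "b > 0" and "convex \<Omega>" "z \<in> \<Omega>"
  shows "limiting_subdiff (constrained_l0_penalty B a b \<Omega>) z = normal_cone (supp_restr B \<Omega> z) z"
    (is "limiting_subdiff ?g z = normal_cone ?C z")
proof
  show "normal_cone ?C z \<subseteq> limiting_subdiff ?g z"
    using frechet_subdiff_subset_limiting_subdiff frechet_subdiff_constrained_l0_penalty[OF assms]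
    by blast
  show "limiting_subdiff ?g z \<subseteq> normal_cone ?C z"
  proof
    fix v assume "v \<in> limiting_subdiff ?g z"
    then obtain xs vs where xs: "xs \<longlonglongrightarrow> z" and gxs: "(\<lambda>k. ?g (xs k)) \<longlonglongrightarrow> ?g z"
      and vs: "vs \<longlonglongrightarrow> v" and frechet: "\<And>k. vs k \<in> frechet_subdiff ?g (xs k)"
      unfolding limiting_subdiff_def by blast
    have "?g z < ereal (l0_penalty B a b z + min a b)"
      using ab \<open>z \<in> \<Omega>\<close> by (simp add: constrained_l0_penalty_eq del: ereal_min)
    with gxs have "eventually (\<lambda>k. ?g (xs k) < ereal (l0_penalty B a b z + min a b)) sequentially"
      by (rule order_tendstoD)
    with eventually_supps_superset[OF xs, of B]
    have "eventually (\<lambda>k. vs k \<in> normal_cone ?C (xs k)) sequentially"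
    proof eventually_elim
      case (elim k)
      then have "xs k \<in> \<Omega>"
        by (simp add: constrained_l0_penalty_eq split: if_splits)
      have "xs k \<in> ?C"
      proof (rule ccontr)
        assume "xs k \<notin> ?C"
        then have "l0_penalty B a b z + min a b \<le> l0_penalty B a b (xs k)"
          using elim ab \<open>xs k \<in> \<Omega>\<close> by (intro l0_penalty_jump) (auto simp: supp_restr_def)
        then show False
          using elim \<open>xs k \<in> \<Omega>\<close> by (simp add: constrained_l0_penalty_eq del: ereal_min)
      qed
      then have "supp_restr B \<Omega> (xs k) = ?C"
        using elim by (auto simp: supp_restr_def)
      then show ?case
        using frechet[of k] frechet_subdiff_constrained_l0_penalty[OF ab \<open>convex \<Omega>\<close> \<open>xs k \<in> \<Omega>\<close>, of B]
        by simp
    qed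
    then show "v \<in> normal_cone ?C z"
      using \<open>z \<in> \<Omega>\<close> xs vs by (intro normal_cone_limit self_mem_supp_restr)
  qed
qed

theorem lemma2p4:
  fixes f :: "real ^ 'n \<Rightarrow> real" and gf :: "real ^ 'n \<Rightarrow> real ^ 'n"
    and B :: "real ^ 'n ^ 'p" and lam1 lam2 :: real and l u z :: "real ^ 'n"
    and \<Omega> :: "(real ^ 'n) set" and g F :: "real ^ 'n \<Rightarrow> ereal"
    and PiZ :: "real ^ 'n \<Rightarrow> (real ^ 'n) set"
  assumes f_C2: "C2_with_grad f gf"
    and lam1: "lam1 > 0" and lam2: "lam2 > 0"
    and l_nonpos: "\<forall>i. l $ i \<le> 0" and u_nonneg: "\<forall>i. u $ i \<ge> 0"
    and Omega_def: "\<Omega> = box_set l u"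
    and g_def: "\<And>x. g x = ereal (lam1 * real (l0 (B *v x)) + lam2 * real (l0 x)) + indicator_fun \<Omega> x"
    and F_def: "\<And>x. F x = ereal (f x) + g x"
    and Pi_def: "\<And>w. PiZ w = {x \<in> \<Omega>. supp x \<subseteq> supp w \<and> supp (B *v x) \<subseteq> supp (B *v w)}"
    and z: "z \<in> \<Omega>"
  shows "limiting_subdiff F z = (\<lambda>v. gf z + v) ` limiting_subdiff g z
       \<and> limiting_subdiff g z = normal_cone (PiZ z) z
       \<and> (\<forall>x. 0 \<in> (\<lambda>v. gf x + v) ` normal_cone (PiZ z) x \<longrightarrow> 0 \<in> limiting_subdiff F x)"
proof -
  have grad: "\<And>x. GDERIV f x :> gf x" and "continuous_on UNIV gf"
    using C2_with_grad_imp_C1[OF f_C2] by blast+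
  have F_eq: "F = (\<lambda>x. ereal (f x) + g x)"
    using F_def by blast
  have g_eq: "g = constrained_l0_penalty B lam1 lam2 \<Omega>"
    by (simp add: fun_eq_iff g_def constrained_l0_penalty_def l0_penalty_def)
  have Pi_eq: "PiZ = supp_restr B \<Omega>"
    by (simp add: fun_eq_iff Pi_def supp_restr_def)
  have "convex \<Omega>"
    by (simp add: Omega_def box_set_eq_cbox)
  have sum_rule: "\<And>x. limiting_subdiff F x = (\<lambda>v. gf x + v) ` limiting_subdiff g x"
    unfolding F_eq using grad \<open>continuous_on UNIV gf\<close> by (rule limiting_subdiff_add_smooth_eq)
  have subdiff_g: "\<And>x. x \<in> \<Omega> \<Longrightarrow> limiting_subdiff g x = normal_cone (PiZ x) x"
    unfolding g_eq Pi_eq using lam1 lam2 \<open>convex \<Omega>\<close> by (rule limiting_subdiff_constrained_l0_penalty)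
  have "normal_cone (PiZ z) x \<subseteq> limiting_subdiff g x" for x
  proof (cases "x \<in> PiZ z")
    case True
    then have "x \<in> \<Omega>" by (simp add: Pi_eq supp_restr_def)
    with True have "normal_cone (PiZ z) x \<subseteq> normal_cone (PiZ x) x"
      unfolding Pi_eq by (intro normal_cone_antimono self_mem_supp_restr supp_restr_mono)
    with subdiff_g[OF \<open>x \<in> \<Omega>\<close>] show ?thesis by simp
  qed (simp add: normal_cone_def)
  then show ?thesis
    using sum_rule subdiff_g[OF z] by blast
qed

end
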